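(* Let $n\ge 2$ and $1\le k\le n-1$ be integers, $\lambda>0$, $s\ge 0$, and $t\in\{1,\dots,n\}$. Let $X_1,\dots,X_n$ be independent random variables each with the shifted-exponential distribution $\mathrm{Shifted\text{-}Exp}(\lambda,s)$, i.e. with CDF $F(y)=1-e^{-\lambda(y-s)}$ for $y\ge s$ and $F(y)=0$ for $y<s$. Let $Y_{t,1}=X_t$ and $$Y_{t,2}=\min\Big(X_t,\ \max\big(\mathrm{mink}(\{X_i\}_{i\neq t})\big)\Big),$$ where $\max(\mathrm{mink}(\{X_i\}_{i\neq t}))$ denotes the $k$-th smallest of the $n-1$ values $X_i$, $i\ne t$. Then $$\Gamma_{SE}:=\frac{E[Y_{t,1}]-E[Y_{t,2}]}{E[Y_{t,1}]}=\frac{1}{s\lambda+1}\cdot\frac{n-k}{n}.$$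
   Context: In an $(n,k,m)$ systematic MDS array code stored on $n$ nodes (any $k$ nodes recover all data), $X_i$ is the access latency of node $i$; $Y_{t,1}$ is the latency of directly accessing node $t$ (DA method) and $Y_{t,2}$ is the latency of the proposed accelerated access algorithms (AAKL/AAUL). $\Gamma_{SE}$ is the relative reduction in expected latency. *)

theory Defs
  imports "HOL-Probability.Probability" "HOL-Library.Multiset"
begin

definition shifted_exp_cdf :: "real \<Rightarrow> real \<Rightarrow> real \<Rightarrow> real" where
  "shifted_exp_cdf l s y = (if y < s then 0 else 1 - exp (- l * (y - s)))"

definition kth_smallest :: "nat \<Rightarrow> real multiset \<Rightarrow> real" where
  "kth_smallest k A = sorted_list_of_multiset A ! (k - 1)"

definition Y2 :: "nat \<Rightarrow> nat \<Rightarrow> nat \<Rightarrow> (nat \<Rightarrow> 'a \<Rightarrow> real) \<Rightarrow> 'a \<Rightarrow> real" where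
  "Y2 n k t X \<omega> = min (X t \<omega>) (kth_smallest k (image_mset (\<lambda>i. X i \<omega>) (mset_set ({1..n} - {t}))))"

end

(* For a nonnegative random variable Y, E[Y] is the integral over [0, oo) of P(Y > y).
   Y_{t,2} > y holds iff X_t > y and fewer than k of the other n - 1 variables are <= y, so by
   independence, with p = F(y), P(Y_{t,2} > y) = sum_{j<k} C(n-1, j) p^j (1 - p)^(n-j).
   Since d/dp sum_{i<=j} C(n, i) p^i (1 - p)^(n-i) = -n C(n-1, j) p^j (1 - p)^(n-1-j) and
   F' = lambda (1 - F) on (s, oo), each summand integrates over [s, oo) to 1/(lambda n); below s
   the tail is 1. Hence E[Y_{t,2}] = s + k/(lambda n), and E[X_t] = s + 1/lambda is the case
   n = 1, k = 1 of the same computation. *)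

theory Submission
  imports Defs "HOL-Real_Asymp.Real_Asymp"
begin

definition binomial_cdf :: "nat \<Rightarrow> nat \<Rightarrow> real \<Rightarrow> real" where
  "binomial_cdf m j p = (\<Sum>i\<le>j. real (m choose i) * p ^ i * (1 - p) ^ (m - i))"

lemma has_real_derivative_binomial_cdf:
  assumes "j \<le> m"
  shows "(binomial_cdf (Suc m) j has_real_derivative
           - (real (Suc m) * real (m choose j) * p ^ j * (1 - p) ^ (m - j))) (at p)"
  using assms
proof (induction j)
  case 0
  have "((\<lambda>p. (1 - p) ^ Suc m) has_real_derivative real (Suc m) * (1 - p) ^ m * (0 - 1)) (at p)"
    by (rule derivative_eq_intros refl)+ simp
  then show ?case
    by (simp add: binomial_cdf_def)
next
  case (Suc j)
  then obtain d where d: "m - j = Suc d"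
    by (metis Suc_diff_Suc Suc_le_lessD)
  then have "m - Suc j = d"
    by simp
  define c where "c = real (Suc m choose Suc j)"
  have "Suc j * (Suc m choose Suc j) = Suc m * (m choose j)"
    by (rule Suc_times_binomial)
  moreover have "Suc d * (Suc m choose Suc j) = Suc m * (m choose Suc j)"
    by (metis binomial_absorb_comp d diff_Suc_1 diff_Suc_Suc)
  ultimately have absorb: "real (Suc j) * c = real (Suc m) * real (m choose j)"
    "real (Suc d) * c = real (Suc m) * real (m choose Suc j)"
    unfolding c_def by (metis of_nat_mult)+
  have "((\<lambda>p. c * p ^ Suc j * (1 - p) ^ Suc d) has_real_derivative
      c * (real (Suc j) * p ^ j * (1 - p) ^ Suc d - real (Suc d) * p ^ Suc j * (1 - p) ^ d)) (at p)"
    by (rule derivative_eq_intros refl)+ (simp add: algebra_simps)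
  also have "c * (real (Suc j) * p ^ j * (1 - p) ^ Suc d - real (Suc d) * p ^ Suc j * (1 - p) ^ d)
      = real (Suc m) * real (m choose j) * p ^ j * (1 - p) ^ Suc d
        - real (Suc m) * real (m choose Suc j) * p ^ Suc j * (1 - p) ^ d"
    unfolding absorb[symmetric] by (simp add: algebra_simps)
  finally have "((\<lambda>p. c * p ^ Suc j * (1 - p) ^ Suc d) has_real_derivative
      real (Suc m) * real (m choose j) * p ^ j * (1 - p) ^ Suc d
      - real (Suc m) * real (m choose Suc j) * p ^ Suc j * (1 - p) ^ d) (at p)" .
  from DERIV_add[OF Suc.IH[OF Suc_leD[OF Suc.prems]] this]
  show ?case
    using \<open>m - Suc j = d\<close> d by (simp add: binomial_cdf_def c_def fun_eq_iff)
qed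

lemma binomial_cdf_0 [simp]: "binomial_cdf m j 0 = 1"
  unfolding binomial_cdf_def by (simp add: sum.atMost_shift)

lemma binomial_cdf_1: "j < m \<Longrightarrow> binomial_cdf m j 1 = 0"
  unfolding binomial_cdf_def by (intro sum.neutral) auto

lemma borel_measurable_shifted_exp_cdf [measurable]:
  "shifted_exp_cdf l s \<in> borel_measurable borel"
  unfolding shifted_exp_cdf_def by measurable

lemma shifted_exp_cdf_nonneg: "l \<ge> 0 \<Longrightarrow> 0 \<le> shifted_exp_cdf l s y"
  by (simp add: shifted_exp_cdf_def)

lemma shifted_exp_cdf_le_1: "shifted_exp_cdf l s y \<le> 1"
  by (simp add: shifted_exp_cdf_def)

lemma nn_integral_shifted_exp_binomial_term:
  fixes l s :: real
  assumes "l > 0" and "j \<le> m"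
  shows "(\<integral>\<^sup>+y. ennreal (real (m choose j) * shifted_exp_cdf l s y ^ j
            * (1 - shifted_exp_cdf l s y) ^ (Suc m - j)) * indicator {s..} y \<partial>lborel)
         = ennreal (1 / (l * real (Suc m)))"
proof -
  define e where "e y = exp (- l * (y - s))" for y
  define c where "c = - 1 / (l * real (Suc m))"
  define G where "G y = c * binomial_cdf (Suc m) j (1 - e y)" for y
  let ?g = "\<lambda>y. real (m choose j) * (1 - e y) ^ j * e y ^ (Suc m - j)"
  have "(G has_real_derivative ?g y) (at y)" for y
  proof -
    have "((\<lambda>y. 1 - e y) has_real_derivative l * e y) (at y)"
      unfolding e_def by (rule derivative_eq_intros refl)+ simp
    from DERIV_chain2[OF has_real_derivative_binomial_cdf[OF assms(2)] this]
    have "(G has_real_derivative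
        c * (- (real (Suc m) * real (m choose j) * (1 - e y) ^ j * e y ^ (m - j)) * (l * e y))) (at y)"
      unfolding G_def by (intro DERIV_cmult) simp
    moreover have "c * (- (real (Suc m) * real (m choose j) * (1 - e y) ^ j * e y ^ (m - j)) * (l * e y))
        = - (c * (l * real (Suc m))) * (real (m choose j) * (1 - e y) ^ j * (e y * e y ^ (m - j)))"
      by (simp add: algebra_simps)
    also have "\<dots> = ?g y"
      using assms by (simp add: c_def Suc_diff_le)
    ultimately show ?thesis
      by simp
  qed
  moreover have "?g y \<ge> 0" if "s \<le> y" for y
    using assms that by (auto simp: e_def mult_nonneg_nonneg)
  moreover have "(G \<longlongrightarrow> 0) at_top"
  proof -
    have "(e \<longlongrightarrow> 0) at_top"
      unfolding e_def using \<open>l > 0\<close> by real_asymp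
    then have "(G \<longlongrightarrow> c * binomial_cdf (Suc m) j (1 - 0)) at_top"
      unfolding G_def binomial_cdf_def by (intro tendsto_intros)
    then show ?thesis
      using assms by (simp add: binomial_cdf_1)
  qed
  ultimately have FTC: "(\<integral>\<^sup>+y. ennreal (?g y) * indicator {s..} y \<partial>lborel) = 0 - G s"
    by (intro nn_integral_FTC_atLeast) (auto simp: e_def)
  have "shifted_exp_cdf l s y = 1 - e y" if "s \<le> y" for y
    using that by (simp add: shifted_exp_cdf_def e_def)
  then have "(\<integral>\<^sup>+y. ennreal (real (m choose j) * shifted_exp_cdf l s y ^ j
      * (1 - shifted_exp_cdf l s y) ^ (Suc m - j)) * indicator {s..} y \<partial>lborel)
      = (\<integral>\<^sup>+y. ennreal (?g y) * indicator {s..} y \<partial>lborel)"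
    by (intro nn_integral_cong) (simp split: split_indicator)
  also have "\<dots> = ennreal (1 / (l * real (Suc m)))"
    unfolding FTC by (simp add: G_def c_def e_def)
  finally show ?thesis .
qed

lemma nn_integral_shifted_exp_binomial_tail:
  fixes l s :: real
  assumes "l > 0" and "s \<ge> 0" and "1 \<le> k" and "k \<le> Suc m"
  shows "(\<integral>\<^sup>+y. ennreal (\<Sum>j<k. real (m choose j) * shifted_exp_cdf l s y ^ j
            * (1 - shifted_exp_cdf l s y) ^ (Suc m - j)) * indicator {0..} y \<partial>lborel)
         = ennreal (s + real k / (l * real (Suc m)))"
proof -
  let ?F = "shifted_exp_cdf l s"
  let ?b = "\<lambda>j y. real (m choose j) * ?F y ^ j * (1 - ?F y) ^ (Suc m - j)"
  have b_nonneg: "0 \<le> ?b j y" for j y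
    using \<open>l > 0\<close> by (simp add: shifted_exp_cdf_nonneg shifted_exp_cdf_le_1)
  have below_s: "(\<Sum>j<k. ?b j y) = 1" if "y < s" for y
  proof -
    have "(\<Sum>j<k. ?b j y) = (\<Sum>j<k. if j = 0 then 1 else 0)"
      using that by (intro sum.cong) (auto simp: shifted_exp_cdf_def)
    then show ?thesis
      using \<open>1 \<le> k\<close> by simp
  qed
  have "ennreal (\<Sum>j<k. ?b j y) * indicator {0..} y
      = indicator {0..<s} y + (\<Sum>j<k. ennreal (?b j y) * indicator {s..} y)" for y
    using \<open>s \<ge> 0\<close> below_s[of y] b_nonneg by (auto simp: lessThan_def split: split_indicator)
  then have "(\<integral>\<^sup>+y. ennreal (\<Sum>j<k. ?b j y) * indicator {0..} y \<partial>lborel)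
      = (\<integral>\<^sup>+y. indicator {0..<s} y + (\<Sum>j<k. ennreal (?b j y) * indicator {s..} y) \<partial>lborel)"
    by (intro nn_integral_cong)
  also have "\<dots> = (\<integral>\<^sup>+y. indicator {0..<s} y \<partial>lborel)
      + (\<integral>\<^sup>+y. (\<Sum>j<k. ennreal (?b j y) * indicator {s..} y) \<partial>lborel)"
    by (rule nn_integral_add) measurable
  also have "\<dots> = ennreal s + (\<Sum>j<k. \<integral>\<^sup>+y. ennreal (?b j y) * indicator {s..} y \<partial>lborel)"
  proof -
    have "(\<integral>\<^sup>+y. (\<Sum>j<k. ennreal (?b j y) * indicator {s..} y) \<partial>lborel)
        = (\<Sum>j<k. \<integral>\<^sup>+y. ennreal (?b j y) * indicator {s..} y \<partial>lborel)"
      by (rule nn_integral_sum) measurable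
    then show ?thesis
      using \<open>s \<ge> 0\<close> by simp
  qed
  also have "\<dots> = ennreal s + ennreal (\<Sum>j<k. 1 / (l * real (Suc m)))"
    using assms by (simp add: nn_integral_shifted_exp_binomial_term del: sum_constant)
  also have "\<dots> = ennreal (s + real k / (l * real (Suc m)))"
    using assms by (simp flip: ennreal_plus)
  finally show ?thesis .
qed

lemma less_kth_smallest_iff:
  fixes A :: "real multiset"
  assumes "1 \<le> k" and "k \<le> size A"
  shows "y < kth_smallest k A \<longleftrightarrow> size (filter_mset (\<lambda>x. x \<le> y) A) < k"
proof -
  define xs where "xs = sorted_list_of_multiset A"
  have sorted: "sorted xs" and len: "length xs = size A"
    unfolding xs_def by (simp_all flip: size_mset)
  have "A = mset xs"
    unfolding xs_def by simp
  then have count: "size (filter_mset (\<lambda>x. x \<le> y) A) = card {i. i < length xs \<and> xs ! i \<le> y}"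
    by (simp add: length_filter_conv_card flip: mset_filter)
  have kth: "kth_smallest k A = xs ! (k - 1)"
    unfolding kth_smallest_def xs_def ..
  have below: "{i. i < length xs \<and> xs ! i \<le> y} \<subseteq> {..<k - 1}" if "y < xs ! (k - 1)"
  proof (intro subsetI CollectI lessThan_iff[THEN iffD2])
    fix i assume i: "i \<in> {i. i < length xs \<and> xs ! i \<le> y}"
    show "i < k - 1"
    proof (rule ccontr)
      assume "\<not> i < k - 1"
      then have "xs ! (k - 1) \<le> xs ! i"
        using i sorted by (simp add: sorted_nth_mono)
      then show False
        using i that by simp
    qed
  qed
  have above: "{..<k} \<subseteq> {i. i < length xs \<and> xs ! i \<le> y}" if "xs ! (k - 1) \<le> y"
  proof
    fix i assume "i \<in> {..<k}"
    then have "i < length xs" and "xs ! i \<le> xs ! (k - 1)"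
      using assms len sorted by (simp_all add: sorted_nth_mono)
    then show "i \<in> {i. i < length xs \<and> xs ! i \<le> y}"
      using that by simp
  qed
  have "card {i. i < length xs \<and> xs ! i \<le> y} < k \<longleftrightarrow> y < xs ! (k - 1)"
  proof
    assume "card {i. i < length xs \<and> xs ! i \<le> y} < k"
    then show "y < xs ! (k - 1)"
      using card_mono[OF _ above] by force
  next
    assume "y < xs ! (k - 1)"
    then show "card {i. i < length xs \<and> xs ! i \<le> y} < k"
      using card_mono[OF _ below] \<open>1 \<le> k\<close> by force
  qed
  then show ?thesis
    unfolding count kth ..
qed

lemma less_Y2_iff:
  assumes "1 \<le> k" and "k \<le> n - 1" and "t \<in> {1..n}"
  shows "y < Y2 n k t X \<omega> \<longleftrightarrow> y < X t \<omega> \<and> card {i \<in> {1..n} - {t}. X i \<omega> \<le> y} < k"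
proof -
  have "size (filter_mset (\<lambda>x. x \<le> y) (image_mset (\<lambda>i. X i \<omega>) (mset_set ({1..n} - {t}))))
      = card {i \<in> {1..n} - {t}. X i \<omega> \<le> y}"
    by (simp add: filter_mset_image_mset)
  moreover have "k \<le> size (image_mset (\<lambda>i. X i \<omega>) (mset_set ({1..n} - {t})))"
    using assms by simp
  ultimately show ?thesis
    unfolding Y2_def using less_kth_smallest_iff[OF assms(1)] by simp
qed

lemma Y2_nonneg:
  assumes "1 \<le> k" and "k \<le> n - 1" and "t \<in> {1..n}"
    and nonneg: "\<And>i. i \<in> {1..n} \<Longrightarrow> 0 \<le> X i \<omega>"
  shows "0 \<le> Y2 n k t X \<omega>"
proof (rule ccontr)
  let ?y = "Y2 n k t X \<omega>"
  assume "\<not> 0 \<le> ?y"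
  then have empty: "{i \<in> {1..n} - {t}. X i \<omega> \<le> ?y} = {}" and "?y < X t \<omega>"
    using nonneg \<open>t \<in> {1..n}\<close> by (auto simp: not_le intro: less_le_trans)
  then show False
    using less_Y2_iff[OF assms(1-3), of ?y X \<omega>, unfolded empty] \<open>1 \<le> k\<close> by simp
qed

lemma sum_subsets_card_less:
  fixes g :: "nat \<Rightarrow> 'b :: comm_semiring_1"
  assumes "finite S"
  shows "(\<Sum>J\<in>{J. J \<subseteq> S \<and> card J < k}. g (card J)) = (\<Sum>j<k. of_nat (card S choose j) * g j)"
proof -
  have "{J. J \<subseteq> S \<and> card J < k} = (\<Union>j<k. {J. J \<subseteq> S \<and> card J = j})"
    by auto
  then have "(\<Sum>J\<in>{J. J \<subseteq> S \<and> card J < k}. g (card J))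
      = (\<Sum>j<k. \<Sum>J\<in>{J. J \<subseteq> S \<and> card J = j}. g (card J))"
    using assms by (simp only:) (rule sum.UNION_disjoint, auto intro: rev_finite_subset[of "Pow S"])
  also have "\<dots> = (\<Sum>j<k. of_nat (card {J. J \<subseteq> S \<and> card J = j}) * g j)"
    by (intro sum.cong refl) simp
  also have "\<dots> = (\<Sum>j<k. of_nat (card S choose j) * g j)"
    using assms by (simp add: n_subsets)
  finally show ?thesis .
qed

lemma (in sigma_finite_measure) nn_integral_eq_tail_integral:
  assumes [measurable]: "Y \<in> borel_measurable M"
  shows "(\<integral>\<^sup>+\<omega>. ennreal (Y \<omega>) \<partial>M)
    = (\<integral>\<^sup>+y. emeasure M {\<omega> \<in> space M. y < Y \<omega>} * indicator {0..} y \<partial>lborel)"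
proof -
  interpret pair_sigma_finite M lborel ..
  have "ennreal (Y \<omega>) = (\<integral>\<^sup>+y. of_bool (0 \<le> y \<and> y < Y \<omega>) \<partial>lborel)" for \<omega>
  proof -
    have "(\<lambda>y. of_bool (0 \<le> y \<and> y < Y \<omega>) :: ennreal) = indicator {0..<Y \<omega>}"
      by (auto simp: indicator_def)
    then show ?thesis
      by (cases "0 \<le> Y \<omega>") (simp_all add: ennreal_neg)
  qed
  then have "(\<integral>\<^sup>+\<omega>. ennreal (Y \<omega>) \<partial>M) = (\<integral>\<^sup>+\<omega>. \<integral>\<^sup>+y. of_bool (0 \<le> y \<and> y < Y \<omega>) \<partial>lborel \<partial>M)"
    by simp
  also have "\<dots> = (\<integral>\<^sup>+y. \<integral>\<^sup>+\<omega>. of_bool (0 \<le> y \<and> y < Y \<omega>) \<partial>M \<partial>lborel)"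
    by (rule Fubini'[symmetric]) measurable
  also have "\<dots> = (\<integral>\<^sup>+y. emeasure M {\<omega> \<in> space M. y < Y \<omega>} * indicator {0..} y \<partial>lborel)"
  proof (rule nn_integral_cong)
    fix y :: real
    have "(\<integral>\<^sup>+\<omega>. of_bool (0 \<le> y \<and> y < Y \<omega>) \<partial>M)
        = (\<integral>\<^sup>+\<omega>. indicator {\<omega> \<in> space M. y < Y \<omega>} \<omega> * indicator {0..} y \<partial>M)"
      by (intro nn_integral_cong) (simp split: split_indicator)
    then show "(\<integral>\<^sup>+\<omega>. of_bool (0 \<le> y \<and> y < Y \<omega>) \<partial>M)
        = emeasure M {\<omega> \<in> space M. y < Y \<omega>} * indicator {0..} y"
      by (simp add: nn_integral_multc)
  qed
  finally show ?thesis .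
qed

lemma Collect_mem_eq_iff: "J \<subseteq> I \<Longrightarrow> {i \<in> I. P i} = J \<longleftrightarrow> (\<forall>i\<in>I. P i \<longleftrightarrow> i \<in> J)"
  by blast

lemma sets_Collect_le_pattern_eq:
  fixes X :: "'i \<Rightarrow> 'a \<Rightarrow> real"
  assumes "finite I" and meas: "\<And>i. i \<in> I \<Longrightarrow> X i \<in> borel_measurable M"
  shows "{\<omega> \<in> space M. {i \<in> I. X i \<omega> \<le> y} = J} \<in> sets M"
proof (cases "J \<subseteq> I")
  case True
  have "{\<omega> \<in> space M. \<forall>i\<in>I. X i \<omega> \<le> y \<longleftrightarrow> i \<in> J} \<in> sets M"
  proof (rule sets.sets_Collect_finite_All)
    fix i assume "i \<in> I"
    then have [measurable]: "X i \<in> borel_measurable M"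
      by (rule meas)
    show "{\<omega> \<in> space M. X i \<omega> \<le> y \<longleftrightarrow> i \<in> J} \<in> sets M"
      by (cases "i \<in> J") simp_all
  qed (rule \<open>finite I\<close>)
  with True show ?thesis
    by (simp add: Collect_mem_eq_iff)
next
  case False
  then have empty: "{\<omega> \<in> space M. {i \<in> I. X i \<omega> \<le> y} = J} = {}"
    by auto
  show ?thesis
    unfolding empty by simp
qed

lemma sets_Collect_le_pattern:
  fixes X :: "'i \<Rightarrow> 'a \<Rightarrow> real"
  assumes "finite I" and "\<And>i. i \<in> I \<Longrightarrow> X i \<in> borel_measurable M"
  shows "{\<omega> \<in> space M. {i \<in> I. X i \<omega> \<le> y} \<in> \<J>} \<in> sets M"
proof -
  have "{\<omega> \<in> space M. {i \<in> I. X i \<omega> \<le> y} \<in> \<J>}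
      = (\<Union>J \<in> \<J> \<inter> Pow I. {\<omega> \<in> space M. {i \<in> I. X i \<omega> \<le> y} = J})"
    by auto
  also have "\<dots> \<in> sets M"
    using sets_Collect_le_pattern_eq[OF assms] \<open>finite I\<close> by (intro sets.finite_UN) auto
  finally show ?thesis .
qed

context prob_space
begin

lemma expectation_eq_tail_integral:
  assumes "Y \<in> borel_measurable M" and "AE \<omega> in M. 0 \<le> Y \<omega>"
    and "\<And>y. prob {\<omega> \<in> space M. y < Y \<omega>} = G y"
    and "(\<integral>\<^sup>+y. ennreal (G y) * indicator {0..} y \<partial>lborel) = ennreal c" and "0 \<le> c"
  shows "expectation Y = c"
proof -
  have "expectation Y = enn2real (\<integral>\<^sup>+\<omega>. ennreal (Y \<omega>) \<partial>M)"
    using assms by (intro integral_eq_nn_integral) auto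
  also have "(\<integral>\<^sup>+\<omega>. ennreal (Y \<omega>) \<partial>M) = ennreal c"
    using assms by (simp add: nn_integral_eq_tail_integral emeasure_eq_measure)
  finally show ?thesis
    using \<open>0 \<le> c\<close> by simp
qed

lemma prob_le_pattern:
  fixes X :: "'i \<Rightarrow> 'a \<Rightarrow> real"
  assumes indep: "indep_vars (\<lambda>_. borel) X I" and "finite I" and "I \<noteq> {}" and "J \<subseteq> I"
    and p: "\<And>i. i \<in> I \<Longrightarrow> prob {\<omega> \<in> space M. X i \<omega> \<le> y} = p"
  shows "prob {\<omega> \<in> space M. {i \<in> I. X i \<omega> \<le> y} = J} = p ^ card J * (1 - p) ^ (card I - card J)"
proof -
  have [measurable]: "X i \<in> borel_measurable M" if "i \<in> I" for i
    using indep that by (simp add: indep_vars_def2)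
  define B where "B i = (if i \<in> J then {..y} else {y<..})" for i
  have "{\<omega> \<in> space M. {i \<in> I. X i \<omega> \<le> y} = J} = (\<Inter>i\<in>I. X i -` B i \<inter> space M)"
    using \<open>I \<noteq> {}\<close> \<open>J \<subseteq> I\<close> by (auto simp: B_def not_le Collect_mem_eq_iff)
  then have "prob {\<omega> \<in> space M. {i \<in> I. X i \<omega> \<le> y} = J} = prob (\<Inter>i\<in>I. X i -` B i \<inter> space M)"
    by (simp only:)
  also have "\<dots> = (\<Prod>i\<in>I. prob (X i -` B i \<inter> space M))"
    using assms by (intro indep_varsD_finite) (auto simp: B_def)
  also have "\<dots> = (\<Prod>i\<in>I. if i \<in> J then p else 1 - p)"
  proof (rule prod.cong)
    fix i assume "i \<in> I"
    have "X i -` {y<..} \<inter> space M = space M - {\<omega> \<in> space M. X i \<omega> \<le> y}"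
      by auto
    then show "prob (X i -` B i \<inter> space M) = (if i \<in> J then p else 1 - p)"
      using p[OF \<open>i \<in> I\<close>] \<open>i \<in> I\<close>
      by (auto simp: B_def vimage_def Collect_conj_eq Int_commute prob_compl)
  qed simp
  also have "\<dots> = p ^ card J * (1 - p) ^ (card I - card J)"
    using assms by (simp add: prod.If_cases Int_absorb1 card_Diff_subset finite_subset flip: Diff_eq)
  finally show ?thesis .
qed

lemma prob_le_pattern_in:
  fixes X :: "'i \<Rightarrow> 'a \<Rightarrow> real"
  assumes indep: "indep_vars (\<lambda>_. borel) X I" and "finite I" and "I \<noteq> {}" and "\<J> \<subseteq> Pow I"
    and "\<And>i. i \<in> I \<Longrightarrow> prob {\<omega> \<in> space M. X i \<omega> \<le> y} = p"
  shows "prob {\<omega> \<in> space M. {i \<in> I. X i \<omega> \<le> y} \<in> \<J>}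
    = (\<Sum>J\<in>\<J>. p ^ card J * (1 - p) ^ (card I - card J))"
proof -
  have [measurable]: "X i \<in> borel_measurable M" if "i \<in> I" for i
    using indep that by (simp add: indep_vars_def2)
  have "finite \<J>"
    using assms by (meson finite_Pow_iff finite_subset)
  have "{\<omega> \<in> space M. {i \<in> I. X i \<omega> \<le> y} \<in> \<J>} = (\<Union>J\<in>\<J>. {\<omega> \<in> space M. {i \<in> I. X i \<omega> \<le> y} = J})"
    by auto
  then have "prob {\<omega> \<in> space M. {i \<in> I. X i \<omega> \<le> y} \<in> \<J>}
      = (\<Sum>J\<in>\<J>. prob {\<omega> \<in> space M. {i \<in> I. X i \<omega> \<le> y} = J})"
    using \<open>finite \<J>\<close> \<open>finite I\<close>
    by (simp only:) (rule finite_measure_finite_Union,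
        auto simp: disjoint_family_on_def intro: sets_Collect_le_pattern_eq)
  also have "\<dots> = (\<Sum>J\<in>\<J>. p ^ card J * (1 - p) ^ (card I - card J))"
    using assms by (intro sum.cong refl prob_le_pattern) auto
  finally show ?thesis .
qed

end

locale iid_shifted_exp = prob_space +
  fixes X :: "nat \<Rightarrow> 'a \<Rightarrow> real" and n :: nat and l s :: real
  assumes rate_pos: "l > 0" and shift_nonneg: "s \<ge> 0"
    and indep: "indep_vars (\<lambda>_. borel) X {1..n}"
    and cdf: "\<And>i y. i \<in> {1..n} \<Longrightarrow> prob {\<omega> \<in> space M. X i \<omega> \<le> y} = shifted_exp_cdf l s y"
begin

lemma borel_measurable_X [measurable]: "i \<in> {1..n} \<Longrightarrow> X i \<in> borel_measurable M"
  using indep by (simp add: indep_vars_def2)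

lemma prob_less_X:
  assumes "i \<in> {1..n}"
  shows "prob {\<omega> \<in> space M. y < X i \<omega>} = 1 - shifted_exp_cdf l s y"
proof -
  have "{\<omega> \<in> space M. y < X i \<omega>} = space M - {\<omega> \<in> space M. X i \<omega> \<le> y}"
    by auto
  then show ?thesis
    using assms by (simp add: prob_compl cdf)
qed

lemma AE_X_nonneg: "AE \<omega> in M. \<forall>i\<in>{1..n}. 0 \<le> X i \<omega>"
proof (intro AE_finite_allI)
  fix i assume "i \<in> {1..n}"
  then have "prob {\<omega> \<in> space M. X i \<omega> \<le> 0} = 0"
    using shift_nonneg by (simp add: cdf shifted_exp_cdf_def)
  then have "{\<omega> \<in> space M. X i \<omega> \<le> 0} \<in> null_sets M"
    using \<open>i \<in> {1..n}\<close> by (simp add: null_sets_def emeasure_eq_measure)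
  then show "AE \<omega> in M. 0 \<le> X i \<omega>"
    by (rule AE_I') auto
qed simp

lemma expectation_X:
  assumes "i \<in> {1..n}"
  shows "expectation (X i) = s + 1 / l"
proof -
  from nn_integral_shifted_exp_binomial_tail[OF rate_pos shift_nonneg, of 1 0]
  have "(\<integral>\<^sup>+y. ennreal (1 - shifted_exp_cdf l s y) * indicator {0..} y \<partial>lborel) = ennreal (s + 1 / l)"
    by simp
  then show ?thesis
    using assms AE_X_nonneg rate_pos shift_nonneg
    by (intro expectation_eq_tail_integral[where G = "\<lambda>y. 1 - shifted_exp_cdf l s y"])
      (auto simp: prob_less_X elim: AE_mp)
qed

context
  fixes k t :: nat
  assumes k_pos: "1 \<le> k" and k_le: "k \<le> n - 1" and t_mem: "t \<in> {1..n}"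
begin

lemma less_Y2_eq_le_pattern:
  "{\<omega> \<in> space M. y < Y2 n k t X \<omega>}
    = {\<omega> \<in> space M. {i \<in> {1..n}. X i \<omega> \<le> y} \<in> {J. J \<subseteq> {1..n} - {t} \<and> card J < k}}"
proof -
  have iff: "y < Y2 n k t X \<omega> \<longleftrightarrow>
      {i \<in> {1..n}. X i \<omega> \<le> y} \<subseteq> {1..n} - {t} \<and> card {i \<in> {1..n}. X i \<omega> \<le> y} < k" for \<omega>
  proof (cases "y < X t \<omega>")
    case True
    then have "{i \<in> {1..n}. X i \<omega> \<le> y} = {i \<in> {1..n} - {t}. X i \<omega> \<le> y}"
      by auto
    moreover have "{i \<in> {1..n}. X i \<omega> \<le> y} \<subseteq> {1..n} - {t}"
      using True by auto
    ultimately show ?thesis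
      unfolding less_Y2_iff[OF k_pos k_le t_mem] using True by simp
  next
    case False
    then have "\<not> {i \<in> {1..n}. X i \<omega> \<le> y} \<subseteq> {1..n} - {t}"
      using t_mem by auto
    with False show ?thesis
      unfolding less_Y2_iff[OF k_pos k_le t_mem] by simp
  qed
  show ?thesis
    by (simp only: iff mem_Collect_eq)
qed

lemma borel_measurable_Y2 [measurable]: "Y2 n k t X \<in> borel_measurable M"
  unfolding borel_measurable_iff_greater less_Y2_eq_le_pattern
  by (intro allI sets_Collect_le_pattern) auto

lemma prob_less_Y2:
  "prob {\<omega> \<in> space M. y < Y2 n k t X \<omega>}
    = (\<Sum>j<k. real (n - 1 choose j) * shifted_exp_cdf l s y ^ j * (1 - shifted_exp_cdf l s y) ^ (n - j))"
proof -
  let ?p = "shifted_exp_cdf l s y"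
  have "prob {\<omega> \<in> space M. y < Y2 n k t X \<omega>}
      = (\<Sum>J\<in>{J. J \<subseteq> {1..n} - {t} \<and> card J < k}. ?p ^ card J * (1 - ?p) ^ (n - card J))"
    unfolding less_Y2_eq_le_pattern using t_mem
    by (subst prob_le_pattern_in[OF indep]) (auto simp: cdf)
  also have "\<dots> = (\<Sum>j<k. real (card ({1..n} - {t}) choose j) * (?p ^ j * (1 - ?p) ^ (n - j)))"
    by (rule sum_subsets_card_less) simp
  finally show ?thesis
    using t_mem by (simp add: mult.assoc)
qed

lemma expectation_Y2: "expectation (Y2 n k t X) = s + real k / (l * real n)"
proof -
  have "Suc (n - 1) = n"
    using k_pos k_le by simp
  with nn_integral_shifted_exp_binomial_tail[OF rate_pos shift_nonneg k_pos, of "n - 1"] k_le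
  have "(\<integral>\<^sup>+y. ennreal (\<Sum>j<k. real (n - 1 choose j) * shifted_exp_cdf l s y ^ j
      * (1 - shifted_exp_cdf l s y) ^ (n - j)) * indicator {0..} y \<partial>lborel)
      = ennreal (s + real k / (l * real n))"
    by simp
  moreover have "AE \<omega> in M. 0 \<le> Y2 n k t X \<omega>"
    using AE_X_nonneg by eventually_elim (auto intro: Y2_nonneg[OF k_pos k_le t_mem])
  ultimately show ?thesis
    using rate_pos shift_nonneg
    by (intro expectation_eq_tail_integral[OF borel_measurable_Y2 _ prob_less_Y2]) auto
qed

end

end

theorem corollary7:
  fixes M :: "'a measure" and X :: "nat \<Rightarrow> 'a \<Rightarrow> real"
    and n k t :: nat and l s :: real
  assumes "prob_space M"
    and "n \<ge> 2" and "1 \<le> k" and "k \<le> n - 1"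
    and "l > 0" and "s \<ge> 0" and "t \<in> {1..n}"
    and "prob_space.indep_vars M (\<lambda>_. borel) X {1..n}"
    and "\<And>i y. i \<in> {1..n} \<Longrightarrow>
           measure M {\<omega> \<in> space M. X i \<omega> \<le> y} = shifted_exp_cdf l s y"
  shows "(prob_space.expectation M (X t) - prob_space.expectation M (Y2 n k t X))
           / prob_space.expectation M (X t)
         = 1 / (s * l + 1) * ((real n - real k) / real n)"
proof -
  interpret iid_shifted_exp M X n l s
    using assms by (simp add: iid_shifted_exp_def iid_shifted_exp_axioms_def)
  have "expectation (X t) = s + 1 / l"
    using assms by (simp add: expectation_X)
  moreover have "expectation (Y2 n k t X) = s + real k / (l * real n)"
    using assms by (simp add: expectation_Y2)
  moreover have "s + 1 / l = (s * l + 1) / l"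
    and "s + 1 / l - (s + real k / (l * real n)) = (real n - real k) / (l * real n)"
    using assms by (simp_all add: field_simps)
  moreover have "s * l + 1 \<noteq> 0"
    using assms by (simp add: add_nonneg_eq_0_iff)
  ultimately show ?thesis
    using assms by simp
qed

end
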